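(* $$\big\|\mathrm{Cov}(\hat{\mathcal{I}}_1(\theta))\big\|_F\le\frac1N\,\Big\|\frac{\partial h_L}{\partial\theta}\Big\|_F^4\,\big\|\mathcal{K}(t)-\mathcal{I}(h_L)\otimes\mathcal{I}(h_L)\big\|_F.$$
   Context: Setup. Fix an input $x\in\mathbb{R}^{n_0}$ and integers $L\ge1$, $n_1,\dots,n_L\ge1$. Network. The parameters are $\theta=(W_0,\dots,W_{L-1})$, with $W_l\in\mathbb{R}^{n_{l+1}\times(n_l+1)}$, viewed as a vector in $\mathbb{R}^{\dim\theta}$. Let $\sigma$ be differentiable and applied entrywise. Set $h_0=x$ and $\bar h_l=(h_l^\top,1)^\top$. For $1\le l\le L-1$ let $h_l=\sigma(W_{l-1}\bar h_{l-1})$, and let $h_L=W_{L-1}\bar h_{L-1}\in\mathbb{R}^{n_L}$. Exponential family. The model is $p(y\mid x,\theta)=\exp(t(y)^\top h_L-F(h_L))$ with respect to a base measure $\nu$, where $t(y)\in\mathbb{R}^{n_L}$ and $F(h)=\log\int\exp(t(y)^\top h)\,d\nu(y)$. Assume $h_L$ lies in the interior of the natural parameter space. Write $\eta=\nabla F(h_L)=\mathbb{E}[t(y)]$ and $\mathcal{I}(h_L)=\nabla^2F(h_L)=\mathrm{Cov}(t(y))$, with $y\sim p(y\mid x,\theta)$. Estimator. Let $\ell=\log p(y\mid x,\theta)$. With $N$ i.i.d. samples $y_i\sim p(y\mid x,\theta)$ and $\ell_i=\log p(y_i\mid x,\theta)$, let $\hat{\mathcal{I}}_1(\theta)=\frac1N\sum_i\frac{\partial\ell_i}{\partial\theta}\frac{\partial\ell_i}{\partial\theta^\top}$.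 Notation. $\mathrm{Cov}(\hat{\mathcal{I}}_1(\theta))$ is the 4-tensor with entries $\mathrm{Cov}(\hat{\mathcal{I}}_1^{ij},\hat{\mathcal{I}}_1^{kl})$. $\mathcal{K}_{abcd}(t)=\mathbb{E}[(t_a-\eta_a)(t_b-\eta_b)(t_c-\eta_c)(t_d-\eta_d)]$. $(\mathcal{I}(h_L)\otimes\mathcal{I}(h_L))_{abcd}=\mathcal{I}_{ab}(h_L)\mathcal{I}_{cd}(h_L)$. $\frac{\partial h_L}{\partial\theta}$ is the $n_L\times\dim\theta$ Jacobian. $\|\cdot\|_F$ is the square root of the sum of squared entries of a tensor. *)

theory Defs
  imports "HOL-Probability.Probability"
begin

text \<open>Parameters: theta (l,i,j) is entry (i,j) of W_l, for l < L, i < n (l+1), j \<le> n l;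
  column j = n l is the bias column.  Vectors are nat-indexed with explicit bounds.\<close>

type_synonym param = "nat \<times> nat \<times> nat \<Rightarrow> real"

definition param_idx :: "nat \<Rightarrow> (nat \<Rightarrow> nat) \<Rightarrow> (nat \<times> nat \<times> nat) set" where
  "param_idx L n = {(l,i,j). l < L \<and> i < n (Suc l) \<and> j \<le> n l}"

definition preact :: "(nat \<Rightarrow> nat) \<Rightarrow> param \<Rightarrow> nat \<Rightarrow> (nat \<Rightarrow> real) \<Rightarrow> nat \<Rightarrow> real" where
  "preact n \<theta> l h i = (\<Sum>j\<le>n l. \<theta> (l,i,j) * (if j < n l then h j else 1))"

fun hidden :: "(real \<Rightarrow> real) \<Rightarrow> (nat \<Rightarrow> nat) \<Rightarrow> (nat \<Rightarrow> real) \<Rightarrow> param \<Rightarrow> nat \<Rightarrow> nat \<Rightarrow> real" where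
  "hidden \<sigma> n x \<theta> 0 = x"
| "hidden \<sigma> n x \<theta> (Suc l) = (\<lambda>i. \<sigma> (preact n \<theta> l (hidden \<sigma> n x \<theta> l) i))"

definition net_out :: "(real \<Rightarrow> real) \<Rightarrow> (nat \<Rightarrow> nat) \<Rightarrow> nat \<Rightarrow> (nat \<Rightarrow> real) \<Rightarrow> param \<Rightarrow> nat \<Rightarrow> real" where
  "net_out \<sigma> n L x \<theta> = preact n \<theta> (L - 1) (hidden \<sigma> n x \<theta> (L - 1))"

definition pderiv_param :: "(param \<Rightarrow> real) \<Rightarrow> param \<Rightarrow> nat \<times> nat \<times> nat \<Rightarrow> real" where
  "pderiv_param f \<theta> p = deriv (\<lambda>s. f (\<theta>(p := \<theta> p + s))) 0"

definition logpart :: "'y measure \<Rightarrow> ('y \<Rightarrow> nat \<Rightarrow> real) \<Rightarrow> nat \<Rightarrow> (nat \<Rightarrow> real) \<Rightarrow> real" where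
  "logpart \<nu> t m h = ln (\<integral>y. exp (\<Sum>a<m. t y a * h a) \<partial>\<nu>)"

definition nat_param_space :: "'y measure \<Rightarrow> ('y \<Rightarrow> nat \<Rightarrow> real) \<Rightarrow> nat \<Rightarrow> (nat \<Rightarrow> real) set" where
  "nat_param_space \<nu> t m = {h. 0 < (\<integral>\<^sup>+y. ennreal (exp (\<Sum>a<m. t y a * h a)) \<partial>\<nu>)
                               \<and> (\<integral>\<^sup>+y. ennreal (exp (\<Sum>a<m. t y a * h a)) \<partial>\<nu>) < \<infinity>}"

definition in_interior_nps :: "'y measure \<Rightarrow> ('y \<Rightarrow> nat \<Rightarrow> real) \<Rightarrow> nat \<Rightarrow> (nat \<Rightarrow> real) \<Rightarrow> bool" where
  "in_interior_nps \<nu> t m h \<longleftrightarrow> (\<exists>e>0. \<forall>h'. (\<Sum>a<m. (h' a - h a)\<^sup>2) < e\<^sup>2 \<longrightarrow> h' \<in> nat_param_space \<nu> t m)"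

definition loglik :: "'y measure \<Rightarrow> ('y \<Rightarrow> nat \<Rightarrow> real) \<Rightarrow> (real \<Rightarrow> real) \<Rightarrow> (nat \<Rightarrow> nat) \<Rightarrow> nat
    \<Rightarrow> (nat \<Rightarrow> real) \<Rightarrow> param \<Rightarrow> 'y \<Rightarrow> real" where
  "loglik \<nu> t \<sigma> n L x \<theta> y =
     (\<Sum>a<n L. t y a * net_out \<sigma> n L x \<theta> a) - logpart \<nu> t (n L) (net_out \<sigma> n L x \<theta>)"

definition model :: "'y measure \<Rightarrow> ('y \<Rightarrow> nat \<Rightarrow> real) \<Rightarrow> (real \<Rightarrow> real) \<Rightarrow> (nat \<Rightarrow> nat) \<Rightarrow> nat
    \<Rightarrow> (nat \<Rightarrow> real) \<Rightarrow> param \<Rightarrow> 'y measure" where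
  "model \<nu> t \<sigma> n L x \<theta> = density \<nu> (\<lambda>y. ennreal (exp (loglik \<nu> t \<sigma> n L x \<theta> y)))"

definition score :: "'y measure \<Rightarrow> ('y \<Rightarrow> nat \<Rightarrow> real) \<Rightarrow> (real \<Rightarrow> real) \<Rightarrow> (nat \<Rightarrow> nat) \<Rightarrow> nat
    \<Rightarrow> (nat \<Rightarrow> real) \<Rightarrow> param \<Rightarrow> 'y \<Rightarrow> nat \<times> nat \<times> nat \<Rightarrow> real" where
  "score \<nu> t \<sigma> n L x \<theta> y p = pderiv_param (\<lambda>\<theta>'. loglik \<nu> t \<sigma> n L x \<theta>' y) \<theta> p"

definition emp_fisher :: "'y measure \<Rightarrow> ('y \<Rightarrow> nat \<Rightarrow> real) \<Rightarrow> (real \<Rightarrow> real) \<Rightarrow> (nat \<Rightarrow> nat) \<Rightarrow> nat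
    \<Rightarrow> (nat \<Rightarrow> real) \<Rightarrow> param \<Rightarrow> nat \<Rightarrow> (nat \<Rightarrow> 'y) \<Rightarrow> nat \<times> nat \<times> nat \<Rightarrow> nat \<times> nat \<times> nat \<Rightarrow> real" where
  "emp_fisher \<nu> t \<sigma> n L x \<theta> N ys p q =
     (1 / real N) * (\<Sum>i<N. score \<nu> t \<sigma> n L x \<theta> (ys i) p * score \<nu> t \<sigma> n L x \<theta> (ys i) q)"

definition covar :: "'a measure \<Rightarrow> ('a \<Rightarrow> real) \<Rightarrow> ('a \<Rightarrow> real) \<Rightarrow> real" where
  "covar M X Y = (\<integral>w. X w * Y w \<partial>M) - (\<integral>w. X w \<partial>M) * (\<integral>w. Y w \<partial>M)"

text \<open>eta = E[t], Fisher I = Cov(t), 4th central moment K\<close>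
definition mean_t :: "'y measure \<Rightarrow> ('y \<Rightarrow> nat \<Rightarrow> real) \<Rightarrow> nat \<Rightarrow> real" where
  "mean_t M t a = (\<integral>y. t y a \<partial>M)"

definition fisher_h :: "'y measure \<Rightarrow> ('y \<Rightarrow> nat \<Rightarrow> real) \<Rightarrow> nat \<Rightarrow> nat \<Rightarrow> real" where
  "fisher_h M t a b = (\<integral>y. (t y a - mean_t M t a) * (t y b - mean_t M t b) \<partial>M)"

definition kurt_t :: "'y measure \<Rightarrow> ('y \<Rightarrow> nat \<Rightarrow> real) \<Rightarrow> nat \<Rightarrow> nat \<Rightarrow> nat \<Rightarrow> nat \<Rightarrow> real" where
  "kurt_t M t a b c d = (\<integral>y. (t y a - mean_t M t a) * (t y b - mean_t M t b)
                            * (t y c - mean_t M t c) * (t y d - mean_t M t d) \<partial>M)"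

end

theory Submission
  imports Defs
begin

(*
  Let eta = E t(y) under the model.  Differentiating the log-partition function under the
  integral sign gives grad F = eta, so the score is dl/dtheta = J^T (t(y) - eta) with
  J = dh_L/dtheta.  Every entry of the estimator is therefore the sample mean of a product of
  two linear forms in the centred statistic t(y) - eta, and for N i.i.d. samples
    Cov(I1^{pq}, I1^{rs}) = 1/N * sum_{abcd} J_ap J_bq J_cr J_ds (K - I (x) I)_{abcd}.
  Cauchy-Schwarz over the index quadruples (a,b,c,d) bounds the Frobenius norm of this
  contraction by |J|_F^4 |K - I (x) I|_F.  Interiority of h_L gives |t(y)| an exponential
  moment; this makes all polynomial moments finite and justifies differentiating under the
  integral.
*)

section \<open>Contracting a fourth-order tensor\<close>

lemma sum_sq_contract4_le:
  fixes J :: "nat \<Rightarrow> 'p \<Rightarrow> real" and T :: "nat \<Rightarrow> nat \<Rightarrow> nat \<Rightarrow> nat \<Rightarrow> real"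
  shows "(\<Sum>p\<in>P. \<Sum>q\<in>P. \<Sum>r\<in>P. \<Sum>s\<in>P.
            (\<Sum>a<m. \<Sum>b<m. \<Sum>c<m. \<Sum>d<m. J a p * J b q * J c r * J d s * T a b c d)\<^sup>2)
    \<le> (\<Sum>a<m. \<Sum>p\<in>P. (J a p)\<^sup>2) ^ 4 * (\<Sum>a<m. \<Sum>b<m. \<Sum>c<m. \<Sum>d<m. (T a b c d)\<^sup>2)"
proof -
  let ?Q = "{..<m} \<times> {..<m} \<times> {..<m} \<times> {..<m}"
  let ?W = "\<lambda>p q r s (a, b, c, d). J a p * J b q * J c r * J d s"
  let ?T = "\<lambda>(a, b, c, d). T a b c d"
  have sum4: "(\<Sum>a<m. \<Sum>b<m. \<Sum>c<m. \<Sum>d<m. f a b c d) = (\<Sum>(a, b, c, d)\<in>?Q. f a b c d)"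
    for f :: "nat \<Rightarrow> nat \<Rightarrow> nat \<Rightarrow> nat \<Rightarrow> real"
    by (simp add: sum.cartesian_product split_def)
  define g where "g p = (\<Sum>a<m. (J a p)\<^sup>2)" for p
  have W: "(\<Sum>x\<in>?Q. (?W p q r s x)\<^sup>2) = g p * g q * g r * g s" for p q r s
  proof -
    have "(\<Sum>x\<in>?Q. (?W p q r s x)\<^sup>2)
        = (\<Sum>a<m. \<Sum>b<m. \<Sum>c<m. \<Sum>d<m. (J a p)\<^sup>2 * (J b q)\<^sup>2 * (J c r)\<^sup>2 * (J d s)\<^sup>2)"
      by (simp add: sum4 split_def power_mult_distrib)
    also have "\<dots> = (\<Sum>a<m. (J a p)\<^sup>2 * (\<Sum>b<m. (J b q)\<^sup>2 * (\<Sum>c<m. (J c r)\<^sup>2 * (\<Sum>d<m. (J d s)\<^sup>2))))"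
      by (simp add: sum_distrib_left mult.assoc)
    also have "\<dots> = g p * g q * g r * g s"
      by (simp only: g_def sum_distrib_right[symmetric] mult.assoc)
    finally show ?thesis .
  qed
  have G: "(\<Sum>p\<in>P. \<Sum>q\<in>P. \<Sum>r\<in>P. \<Sum>s\<in>P. g p * g q * g r * g s) = (\<Sum>a<m. \<Sum>p\<in>P. (J a p)\<^sup>2) ^ 4"
  proof -
    have "(\<Sum>p\<in>P. \<Sum>q\<in>P. \<Sum>r\<in>P. \<Sum>s\<in>P. g p * g q * g r * g s)
        = (\<Sum>p\<in>P. g p * (\<Sum>q\<in>P. g q * (\<Sum>r\<in>P. g r * (\<Sum>s\<in>P. g s))))"
      by (simp add: sum_distrib_left mult.assoc)
    also have "\<dots> = (\<Sum>p\<in>P. g p) ^ 4"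
      by (simp add: power4_eq_xxxx sum_distrib_right[symmetric] mult.assoc)
    also have "(\<Sum>p\<in>P. g p) = (\<Sum>a<m. \<Sum>p\<in>P. (J a p)\<^sup>2)"
      unfolding g_def by (rule sum.swap)
    finally show ?thesis .
  qed
  have "(\<Sum>p\<in>P. \<Sum>q\<in>P. \<Sum>r\<in>P. \<Sum>s\<in>P.
            (\<Sum>a<m. \<Sum>b<m. \<Sum>c<m. \<Sum>d<m. J a p * J b q * J c r * J d s * T a b c d)\<^sup>2)
      = (\<Sum>p\<in>P. \<Sum>q\<in>P. \<Sum>r\<in>P. \<Sum>s\<in>P. (\<Sum>x\<in>?Q. ?W p q r s x * ?T x)\<^sup>2)"
    by (simp add: sum4 split_def)
  also have "\<dots> \<le> (\<Sum>p\<in>P. \<Sum>q\<in>P. \<Sum>r\<in>P. \<Sum>s\<in>P. (\<Sum>x\<in>?Q. (?W p q r s x)\<^sup>2) * (\<Sum>x\<in>?Q. (?T x)\<^sup>2))"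
    by (intro sum_mono Cauchy_Schwarz_ineq_sum)
  also have "\<dots> = (\<Sum>p\<in>P. \<Sum>q\<in>P. \<Sum>r\<in>P. \<Sum>s\<in>P. g p * g q * g r * g s) * (\<Sum>x\<in>?Q. (?T x)\<^sup>2)"
    by (simp only: W sum_distrib_right)
  finally show ?thesis
    by (simp only: G sum4 split_def)
qed

lemma norm_contract4_le:
  fixes J :: "nat \<Rightarrow> 'p \<Rightarrow> real" and T :: "nat \<Rightarrow> nat \<Rightarrow> nat \<Rightarrow> nat \<Rightarrow> real"
  assumes "k \<ge> 0"
  shows "sqrt (\<Sum>p\<in>P. \<Sum>q\<in>P. \<Sum>r\<in>P. \<Sum>s\<in>P.
            (k * (\<Sum>a<m. \<Sum>b<m. \<Sum>c<m. \<Sum>d<m. J a p * J b q * J c r * J d s * T a b c d))\<^sup>2)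
    \<le> k * (sqrt (\<Sum>a<m. \<Sum>p\<in>P. (J a p)\<^sup>2)) ^ 4 * sqrt (\<Sum>a<m. \<Sum>b<m. \<Sum>c<m. \<Sum>d<m. (T a b c d)\<^sup>2)"
proof -
  let ?A = "\<Sum>a<m. \<Sum>p\<in>P. (J a p)\<^sup>2"
  let ?T = "\<Sum>a<m. \<Sum>b<m. \<Sum>c<m. \<Sum>d<m. (T a b c d)\<^sup>2"
  have "(\<Sum>p\<in>P. \<Sum>q\<in>P. \<Sum>r\<in>P. \<Sum>s\<in>P.
            (k * (\<Sum>a<m. \<Sum>b<m. \<Sum>c<m. \<Sum>d<m. J a p * J b q * J c r * J d s * T a b c d))\<^sup>2)
      \<le> k\<^sup>2 * (?A ^ 4 * ?T)"
    using sum_sq_contract4_le[where P=P and m=m and J=J and T=T]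
    by (simp add: power_mult_distrib sum_distrib_left[symmetric] mult_left_mono)
  also have "\<dots> = (k * (sqrt ?A) ^ 4 * sqrt ?T)\<^sup>2"
  proof -
    have "(sqrt ?A ^ 4)\<^sup>2 = (sqrt ?A ^ 2) ^ 4"
      by (simp flip: power_mult)
    also have "\<dots> = ?A ^ 4"
      by (simp add: sum_nonneg)
    finally have "(sqrt ?A ^ 4)\<^sup>2 = ?A ^ 4" .
    moreover have "(sqrt ?T)\<^sup>2 = ?T"
      by (simp add: sum_nonneg)
    ultimately show ?thesis
      by (simp add: power_mult_distrib)
  qed
  finally show ?thesis
    using assms by (simp add: real_sqrt_le_iff sum_nonneg real_le_lsqrt)
qed

section \<open>Covariances of sample means and of products of linear forms\<close>

lemma integral_PiM_pair:
  fixes f g :: "'y \<Rightarrow> real" and N :: nat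
  assumes M: "prob_space M" and f: "integrable M f" and g: "integrable M g"
    and fg: "integrable M (\<lambda>y. f y * g y)" and ij: "i < N" "j < N"
  shows "integrable (PiM {..<N} (\<lambda>_. M)) (\<lambda>ys. f (ys i) * g (ys j))"
    and "(\<integral>ys. f (ys i) * g (ys j) \<partial>PiM {..<N} (\<lambda>_. M))
         = (if i = j then \<integral>y. f y * g y \<partial>M else (\<integral>y. f y \<partial>M) * (\<integral>y. g y \<partial>M))"
proof -
  interpret product_sigma_finite "\<lambda>_::nat. M"
    by (simp add: product_sigma_finite_def M prob_space_imp_sigma_finite)
  define F where "F k y = (if k = i then f y else 1) * (if k = j then g y else 1)" for k y
  have intF: "integrable M (F k)" for k
    using f g fg M
    by (cases "k = i"; cases "k = j")
       (auto simp: F_def[abs_def] prob_space_def intro: finite_measure.integrable_const)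
  have "(\<Prod>k<N. F k (ys k)) = f (ys i) * g (ys j)" for ys
    using ij by (simp add: F_def prod.distrib)
  moreover have "(\<Prod>k<N. integral\<^sup>L M (F k))
      = (if i = j then \<integral>y. f y * g y \<partial>M else (\<integral>y. f y \<partial>M) * (\<integral>y. g y \<partial>M))"
  proof (cases "i = j")
    case True
    have "integral\<^sup>L M (F k) = (if k = i then \<integral>y. f y * g y \<partial>M else 1)" for k
      using True by (simp add: F_def[abs_def] prob_space.prob_space[OF M])
    then show ?thesis using True ij by simp
  next
    case False
    have "integral\<^sup>L M (F k) = (if k = i then \<integral>y. f y \<partial>M else 1) * (if k = j then \<integral>y. g y \<partial>M else 1)" for k
      using False by (auto simp: F_def[abs_def] prob_space.prob_space[OF M])
    then show ?thesis using False ij by (simp add: prod.distrib)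
  qed
  ultimately show "integrable (PiM {..<N} (\<lambda>_. M)) (\<lambda>ys. f (ys i) * g (ys j))"
    and "(\<integral>ys. f (ys i) * g (ys j) \<partial>PiM {..<N} (\<lambda>_. M))
         = (if i = j then \<integral>y. f y * g y \<partial>M else (\<integral>y. f y \<partial>M) * (\<integral>y. g y \<partial>M))"
    using product_integrable_prod[of "{..<N}" F] product_integral_prod[of "{..<N}" F] intF
    by simp_all
qed

lemma covar_sample_mean:
  fixes f g :: "'y \<Rightarrow> real" and N :: nat
  assumes M: "prob_space M" and f: "integrable M f" and g: "integrable M g"
    and fg: "integrable M (\<lambda>y. f y * g y)" and N: "N \<ge> 1"
  shows "covar (PiM {..<N} (\<lambda>_. M))
           (\<lambda>ys. 1 / real N * (\<Sum>i<N. f (ys i))) (\<lambda>ys. 1 / real N * (\<Sum>i<N. g (ys i)))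
         = 1 / real N * covar M f g"
proof -
  let ?S = "PiM {..<N} (\<lambda>_. M)"
  let ?A = "\<integral>y. f y * g y \<partial>M" and ?F = "\<integral>y. f y \<partial>M" and ?G = "\<integral>y. g y \<partial>M"
  have one: "integrable M (\<lambda>_. 1::real)" and int_one: "(\<integral>y. 1 \<partial>M) = (1::real)"
    using M by (auto simp: prob_space_def prob_space.prob_space intro: finite_measure.integrable_const)
  have int_f: "integrable ?S (\<lambda>ys. f (ys i))" "(\<integral>ys. f (ys i) \<partial>?S) = ?F" if "i < N" for i
    using integral_PiM_pair[OF M f one _ that that] by (simp_all add: f int_one)
  have int_g: "integrable ?S (\<lambda>ys. g (ys i))" "(\<integral>ys. g (ys i) \<partial>?S) = ?G" if "i < N" for i
    using integral_PiM_pair[OF M g one _ that that] by (simp_all add: g int_one)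
  have int_fg: "integrable ?S (\<lambda>ys. f (ys i) * g (ys j))"
    and E_fg: "(\<integral>ys. f (ys i) * g (ys j) \<partial>?S) = (if i = j then ?A else ?F * ?G)"
    if "i < N" "j < N" for i j
    using integral_PiM_pair[OF M f g fg that] by simp_all
  have mean_f: "(\<integral>ys. 1 / real N * (\<Sum>i<N. f (ys i)) \<partial>?S) = ?F"
    using int_f N by (simp add: Bochner_Integration.integral_sum)
  have mean_g: "(\<integral>ys. 1 / real N * (\<Sum>i<N. g (ys i)) \<partial>?S) = ?G"
    using int_g N by (simp add: Bochner_Integration.integral_sum)
  have "(\<integral>ys. (\<Sum>i<N. \<Sum>j<N. f (ys i) * g (ys j)) \<partial>?S)
      = (\<Sum>i<N. \<integral>ys. (\<Sum>j<N. f (ys i) * g (ys j)) \<partial>?S)"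
    using int_fg by (intro Bochner_Integration.integral_sum Bochner_Integration.integrable_sum) auto
  also have "\<dots> = (\<Sum>i<N. \<Sum>j<N. \<integral>ys. f (ys i) * g (ys j) \<partial>?S)"
    using int_fg by (intro sum.cong refl Bochner_Integration.integral_sum) auto
  finally have "(\<integral>ys. 1 / real N * (\<Sum>i<N. f (ys i)) * (1 / real N * (\<Sum>j<N. g (ys j))) \<partial>?S)
      = (1 / real N)\<^sup>2 * (\<Sum>i<N. \<Sum>j<N. \<integral>ys. f (ys i) * g (ys j) \<partial>?S)"
    by (simp add: sum_product power2_eq_square algebra_simps)
  also have "\<dots> = (1 / real N)\<^sup>2 * (\<Sum>i<N. \<Sum>j<N. ?F * ?G + (if i = j then ?A - ?F * ?G else 0))"
    using E_fg by (intro arg_cong[where f="\<lambda>x. _ * x"] sum.cong) auto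
  also have "\<dots> = 1 / real N * (?A - ?F * ?G) + ?F * ?G"
    using N by (simp add: sum.distrib power2_eq_square field_simps)
  finally show ?thesis
    unfolding covar_def mean_f mean_g by simp
qed

lemma integral_sum4:
  fixes f :: "'a \<Rightarrow> 'b \<Rightarrow> 'c \<Rightarrow> 'd \<Rightarrow> 'y \<Rightarrow> real"
  assumes "\<And>a b c d. a \<in> A \<Longrightarrow> b \<in> B \<Longrightarrow> c \<in> C \<Longrightarrow> d \<in> D \<Longrightarrow> integrable M (f a b c d)"
  shows "(\<integral>y. (\<Sum>a\<in>A. \<Sum>b\<in>B. \<Sum>c\<in>C. \<Sum>d\<in>D. k a b c d * f a b c d y) \<partial>M)
       = (\<Sum>a\<in>A. \<Sum>b\<in>B. \<Sum>c\<in>C. \<Sum>d\<in>D. k a b c d * integral\<^sup>L M (f a b c d))"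
  using assms by (simp add: Bochner_Integration.integral_sum Bochner_Integration.integrable_sum)

lemma covar_contract4:
  fixes X :: "nat \<Rightarrow> 'y \<Rightarrow> real" and J :: "nat \<Rightarrow> 'p \<Rightarrow> real"
  assumes I4: "\<And>a b c d. a < m \<Longrightarrow> b < m \<Longrightarrow> c < m \<Longrightarrow> d < m \<Longrightarrow>
                 integrable M (\<lambda>y. X a y * X b y * (X c y * X d y))"
    and I2: "\<And>a b. a < m \<Longrightarrow> b < m \<Longrightarrow> integrable M (\<lambda>y. X a y * X b y)"
  defines "u \<equiv> \<lambda>p y. \<Sum>a<m. X a y * J a p"
  shows "covar M (\<lambda>y. u p y * u q y) (\<lambda>y. u r y * u s y)
    = (\<Sum>a<m. \<Sum>b<m. \<Sum>c<m. \<Sum>d<m. J a p * J b q * J c r * J d s *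
         covar M (\<lambda>y. X a y * X b y) (\<lambda>y. X c y * X d y))"
proof -
  have uu: "u p y * u q y = (\<Sum>a<m. \<Sum>b<m. J a p * J b q * (X a y * X b y))" for p q y
    unfolding u_def sum_product by (simp add: mult_ac)
  have E2: "(\<integral>y. u p y * u q y \<partial>M) = (\<Sum>a<m. \<Sum>b<m. J a p * J b q * (\<integral>y. X a y * X b y \<partial>M))" for p q
    unfolding uu using I2
    by (subst Bochner_Integration.integral_sum; force intro: Bochner_Integration.integral_sum sum.cong)
  have "(\<integral>y. u p y * u q y * (u r y * u s y) \<partial>M)
      = (\<integral>y. (\<Sum>a<m. \<Sum>b<m. \<Sum>c<m. \<Sum>d<m.
           J a p * J b q * J c r * J d s * (X a y * X b y * (X c y * X d y))) \<partial>M)"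
    unfolding uu sum_distrib_right unfolding sum_distrib_left by (simp add: mult_ac)
  also have "\<dots> = (\<Sum>a<m. \<Sum>b<m. \<Sum>c<m. \<Sum>d<m.
           J a p * J b q * J c r * J d s * (\<integral>y. X a y * X b y * (X c y * X d y) \<partial>M))"
    using I4 by (subst integral_sum4) auto
  finally show ?thesis
    unfolding covar_def E2 sum_distrib_right unfolding sum_distrib_left
    by (simp add: sum_subtractf[symmetric] algebra_simps)
qed

section \<open>Elementary analytic bounds\<close>

lemma exp_mean_le_sum_exp:
  fixes u :: "nat \<Rightarrow> real"
  assumes "m \<ge> 1"
  shows "exp ((\<Sum>a<m. u a) / m) \<le> (\<Sum>a<m. exp (u a))"
proof -
  have "u ` {..<m} \<noteq> {}"
    using assms by (auto simp: lessThan_empty_iff)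
  from Max_in[OF _ this] obtain a0 where a0: "a0 < m" "u a0 = Max (u ` {..<m})"
    by auto
  have "(\<Sum>a<m. u a) \<le> (\<Sum>a<m. u a0)"
    using a0 by (intro sum_mono) auto
  then have "exp ((\<Sum>a<m. u a) / m) \<le> exp (u a0)"
    using assms by (simp add: field_simps)
  also have "\<dots> \<le> (\<Sum>a<m. exp (u a))"
    using a0 by (intro member_le_sum) auto
  finally show ?thesis .
qed

lemma abs_exp_minus_one_le: "\<bar>exp u - 1\<bar> \<le> \<bar>u\<bar> * exp \<bar>u\<bar>" for u :: real
proof (cases "u \<ge> 0")
  case True
  have "1 - u \<le> exp (- u)"
    using exp_ge_add_one_self[of "- u"] by simp
  then have "(1 - u) * exp u \<le> 1"
    by (simp add: exp_minus field_simps)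
  with True show ?thesis
    by (simp add: algebra_simps)
next
  case False
  have "- u * 1 \<le> - u * exp (- u)"
    using False by (intro mult_left_mono) auto
  moreover have "1 + u \<le> exp u"
    by (rule exp_ge_add_one_self)
  moreover have "\<bar>exp u - 1\<bar> = 1 - exp u" and abs_u: "\<bar>u\<bar> = - u"
    using False by auto
  ultimately show ?thesis
    unfolding abs_u by linarith
qed

lemma le_scaled_exp: "0 < d \<Longrightarrow> x \<le> exp (d * x) / d" for x d :: real
proof -
  have "d * x \<le> exp (d * x)"
    using exp_ge_add_one_self[of "d * x"] by linarith
  then show "0 < d \<Longrightarrow> x \<le> exp (d * x) / d"
    by (simp add: pos_le_divide_eq mult.commute)
qed

lemma integral_dominated_convergence_at:
  fixes s :: "real \<Rightarrow> 'a \<Rightarrow> real"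
  assumes "f \<in> borel_measurable M" "\<And>r. s r \<in> borel_measurable M" "integrable M w"
    and lim: "AE y in M. ((\<lambda>r. s r y) \<longlongrightarrow> f y) (at x0)"
    and bound: "\<forall>\<^sub>F r in at x0. AE y in M. \<bar>s r y\<bar> \<le> w y"
  shows "((\<lambda>r. integral\<^sup>L M (s r)) \<longlongrightarrow> integral\<^sup>L M f) (at x0)"
  unfolding tendsto_at_iff_sequentially comp_def
proof (intro allI impI)
  fix X :: "nat \<Rightarrow> real"
  assume "\<forall>i. X i \<in> UNIV - {x0}" "X \<longlonglongrightarrow> x0"
  then have X: "filterlim X (at x0) sequentially"
    by (auto simp: filterlim_at)
  from filterlim_iff[THEN iffD1, OF X, rule_format, OF bound]
  obtain N where w: "\<And>n. N \<le> n \<Longrightarrow> AE y in M. \<bar>s (X n) y\<bar> \<le> w y"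
    by (auto simp: eventually_sequentially)
  show "(\<lambda>n. integral\<^sup>L M (s (X n))) \<longlonglongrightarrow> integral\<^sup>L M f"
  proof (rule LIMSEQ_offset, rule integral_dominated_convergence)
    show "AE y in M. norm (s (X (n + N)) y) \<le> w y" for n
      using w[of "n + N"] by simp
    show "AE y in M. (\<lambda>n. s (X (n + N)) y) \<longlonglongrightarrow> f y"
      using lim
    proof eventually_elim
      case (elim y)
      then show ?case
        by (intro LIMSEQ_ignore_initial_segment filterlim_compose[OF _ X])
    qed
  qed (use assms in auto)
qed

lemma eventually_abs_diff_le_deriv:
  assumes "(f has_real_derivative D) (at x)"
  shows "\<forall>\<^sub>F s in at x. \<bar>f s - f x\<bar> \<le> (\<bar>D\<bar> + 1) * \<bar>s - x\<bar>"
proof -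
  have "((\<lambda>s. (f s - f x) / (s - x)) \<longlongrightarrow> D) (at x)"
    using assms by (simp add: has_field_derivative_iff)
  then have "\<forall>\<^sub>F s in at x. \<bar>(f s - f x) / (s - x) - D\<bar> < 1"
    by (simp add: tendsto_iff dist_real_def)
  moreover have "\<forall>\<^sub>F s in at x. s \<noteq> x"
    by (simp add: eventually_at_filter)
  ultimately show ?thesis
  proof eventually_elim
    case (elim s)
    then have "\<bar>(f s - f x) / (s - x)\<bar> \<le> \<bar>D\<bar> + 1"
      by linarith
    with elim(2) show ?case
      by (simp add: abs_divide divide_le_eq)
  qed
qed

section \<open>Exponential families\<close>

locale exp_family =
  fixes \<nu> :: "'y measure" and t :: "'y \<Rightarrow> nat \<Rightarrow> real" and m :: nat and h :: "nat \<Rightarrow> real"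
  assumes t_measurable[measurable]: "a < m \<Longrightarrow> (\<lambda>y. t y a) \<in> borel_measurable \<nu>"
    and interior: "in_interior_nps \<nu> t m h"
    and dim_pos: "m \<ge> 1"
begin

definition udens :: "(nat \<Rightarrow> real) \<Rightarrow> 'y \<Rightarrow> real" where
  "udens h' y = exp (\<Sum>a<m. t y a * h' a)"

definition tnorm :: "'y \<Rightarrow> real" where
  "tnorm y = (\<Sum>a<m. \<bar>t y a\<bar>)"

definition partition :: "(nat \<Rightarrow> real) \<Rightarrow> real" where
  "partition h' = (\<integral>y. udens h' y \<partial>\<nu>)"

lemma udens_measurable[measurable]: "udens h' \<in> borel_measurable \<nu>"
  unfolding udens_def[abs_def] by measurable

lemma tnorm_measurable[measurable]: "tnorm \<in> borel_measurable \<nu>"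
  unfolding tnorm_def[abs_def] by measurable

lemma tnorm_nonneg: "tnorm y \<ge> 0"
  by (simp add: tnorm_def sum_nonneg)

lemma abs_t_le_tnorm: "a < m \<Longrightarrow> \<bar>t y a\<bar> \<le> tnorm y"
  unfolding tnorm_def by (rule member_le_sum) auto

lemma udens_pos: "udens h' y > 0"
  by (simp add: udens_def)

lemma logpart_eq_ln_partition: "logpart \<nu> t m h' = ln (partition h')"
  by (simp add: logpart_def partition_def udens_def)

lemma integrable_udens_near:
  obtains \<delta> where "\<delta> > 0" "\<And>h'. (\<Sum>a<m. (h' a - h a)\<^sup>2) < \<delta>\<^sup>2 \<Longrightarrow> integrable \<nu> (udens h')"
proof -
  obtain \<delta> where "\<delta> > 0" and \<delta>: "\<And>h'. (\<Sum>a<m. (h' a - h a)\<^sup>2) < \<delta>\<^sup>2 \<Longrightarrow> h' \<in> nat_param_space \<nu> t m"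
    using interior unfolding in_interior_nps_def by blast
  moreover have "integrable \<nu> (udens h')" if "(\<Sum>a<m. (h' a - h a)\<^sup>2) < \<delta>\<^sup>2" for h'
    using \<delta>[OF that] by (intro integrableI_bounded) (auto simp: nat_param_space_def udens_def)
  ultimately show ?thesis
    using that by blast
qed

lemma integrable_udens: "integrable \<nu> (udens h)"
proof -
  obtain \<delta> where "\<delta> > 0" "\<And>h'. (\<Sum>a<m. (h' a - h a)\<^sup>2) < \<delta>\<^sup>2 \<Longrightarrow> integrable \<nu> (udens h')"
    using integrable_udens_near by blast
  then show ?thesis
    by simp
qed

lemma partition_pos: "partition h > 0"
proof -
  have "0 < (\<integral>\<^sup>+y. ennreal (udens h y) \<partial>\<nu>)"
    using interior unfolding in_interior_nps_def nat_param_space_def udens_def by force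
  also have "(\<integral>\<^sup>+y. ennreal (udens h y) \<partial>\<nu>) = ennreal (partition h)"
    unfolding partition_def using integrable_udens udens_pos
    by (intro nn_integral_eq_integral) (auto intro: less_imp_le)
  finally show ?thesis
    by simp
qed

lemma udens_shift: "a < m \<Longrightarrow> udens (h(a := h a + r)) y = udens h y * exp (r * t y a)"
proof -
  assume a: "a < m"
  have "(\<Sum>a'<m. t y a' * (h(a := h a + r)) a')
      = (\<Sum>a'<m. t y a' * h a' + (if a' = a then r * t y a else 0))"
    by (intro sum.cong) (auto simp: algebra_simps)
  also have "\<dots> = (\<Sum>a'<m. t y a' * h a') + r * t y a"
    using a by (simp add: sum.distrib)
  finally show ?thesis
    by (simp add: udens_def exp_add)
qed

lemma udens_cong: "(\<And>a. a < m \<Longrightarrow> h1 a = h2 a) \<Longrightarrow> udens h1 = udens h2"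
  unfolding udens_def by (intro ext arg_cong[where f = exp] sum.cong) auto

lemma exp_tnorm_le_sum_exp: "exp (r / m * tnorm y) \<le> (\<Sum>a<m. exp (r * t y a) + exp (- r * t y a))"
proof -
  have "exp (r / m * tnorm y) = exp ((\<Sum>a<m. r * \<bar>t y a\<bar>) / m)"
    by (simp add: tnorm_def sum_distrib_left sum_divide_distrib)
  also have "\<dots> \<le> (\<Sum>a<m. exp (r * \<bar>t y a\<bar>))"
    using dim_pos by (rule exp_mean_le_sum_exp)
  also have "\<dots> \<le> (\<Sum>a<m. exp (r * t y a) + exp (- r * t y a))"
  proof (intro sum_mono)
    fix a
    show "exp (r * \<bar>t y a\<bar>) \<le> exp (r * t y a) + exp (- r * t y a)"
      by (cases "t y a \<ge> 0") (auto intro: add_increasing add_increasing2 less_imp_le)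
  qed
  finally show ?thesis .
qed

text \<open>Shifting \<open>h\<close> by \<open>\<plusminus>r\<close> in a single coordinate stays in the natural parameter space,
  and these \<open>2m\<close> shifted densities together dominate \<open>exp (c |t(y)|\<^sub>1)\<close>.\<close>

lemma integrable_udens_exp_tnorm:
  obtains c where "c > 0" "integrable \<nu> (\<lambda>y. udens h y * exp (c * tnorm y))"
proof -
  obtain \<delta> where "\<delta> > 0" and \<delta>: "\<And>h'. (\<Sum>a<m. (h' a - h a)\<^sup>2) < \<delta>\<^sup>2 \<Longrightarrow> integrable \<nu> (udens h')"
    using integrable_udens_near by blast
  define r where "r = \<delta> / 2"
  have "r > 0"
    using \<open>\<delta> > 0\<close> by (simp add: r_def)
  have shift: "integrable \<nu> (\<lambda>y. udens h y * exp (s * t y a))" if "a < m" "\<bar>s\<bar> = r" for a s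
  proof -
    have "(\<Sum>a'<m. ((h(a := h a + s)) a' - h a')\<^sup>2) = (\<Sum>a'<m. if a' = a then s\<^sup>2 else 0)"
      by (intro sum.cong) auto
    also have "\<dots> = r\<^sup>2"
      using that by (simp add: power2_abs[of s, symmetric])
    also have "\<dots> < \<delta>\<^sup>2"
      using \<open>\<delta> > 0\<close> by (simp add: r_def power_divide)
    finally have "integrable \<nu> (udens (h(a := h a + s)))"
      by (rule \<delta>)
    moreover have "udens (h(a := h a + s)) = (\<lambda>y. udens h y * exp (s * t y a))"
      using \<open>a < m\<close> by (simp add: udens_shift fun_eq_iff)
    ultimately show ?thesis
      by simp
  qed
  define c where "c = r / m"
  have "c > 0"
    using \<open>r > 0\<close> dim_pos by (simp add: c_def)
  moreover have "integrable \<nu> (\<lambda>y. udens h y * exp (c * tnorm y))"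
  proof (rule Bochner_Integration.integrable_bound)
    show "integrable \<nu> (\<lambda>y. \<Sum>a<m. udens h y * exp (r * t y a) + udens h y * exp (- r * t y a))"
      using \<open>r > 0\<close>
      by (intro Bochner_Integration.integrable_sum Bochner_Integration.integrable_add shift) auto
    show "AE y in \<nu>. norm (udens h y * exp (c * tnorm y))
        \<le> norm (\<Sum>a<m. udens h y * exp (r * t y a) + udens h y * exp (- r * t y a))"
    proof (intro AE_I2)
      fix y
      have "exp (c * tnorm y) \<le> (\<Sum>a<m. exp (r * t y a) + exp (- r * t y a))"
        unfolding c_def by (rule exp_tnorm_le_sum_exp)
      then have "udens h y * exp (c * tnorm y)
          \<le> udens h y * (\<Sum>a<m. exp (r * t y a) + exp (- r * t y a))"
        using udens_pos[of h y] by (intro mult_left_mono) auto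
      also have "\<dots> = (\<Sum>a<m. udens h y * exp (r * t y a) + udens h y * exp (- r * t y a))"
        by (simp add: sum_distrib_left distrib_left)
      finally show "norm (udens h y * exp (c * tnorm y))
          \<le> norm (\<Sum>a<m. udens h y * exp (r * t y a) + udens h y * exp (- r * t y a))"
        using udens_pos[of h y] by (simp add: sum_nonneg add_nonneg_nonneg)
    qed
  qed measurable
  ultimately show ?thesis
    using that by blast
qed

definition poly_growth :: "nat \<Rightarrow> ('y \<Rightarrow> real) \<Rightarrow> bool" where
  "poly_growth k f \<longleftrightarrow> f \<in> borel_measurable \<nu> \<and> (\<exists>C. \<forall>y. \<bar>f y\<bar> \<le> C * (1 + tnorm y) ^ k)"

lemma poly_growth_const: "poly_growth k (\<lambda>_. c)"
  unfolding poly_growth_def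
proof (intro conjI exI allI)
  fix y
  have "1 \<le> (1 + tnorm y) ^ k"
    using tnorm_nonneg[of y] by (simp add: one_le_power)
  then show "\<bar>c\<bar> \<le> \<bar>c\<bar> * (1 + tnorm y) ^ k"
    by (simp add: mult_le_cancel_left1)
qed simp

lemma poly_growth_t:
  assumes "a < m"
  shows "poly_growth 1 (\<lambda>y. t y a)"
proof -
  have "\<bar>t y a\<bar> \<le> 1 * (1 + tnorm y) ^ 1" for y
    using abs_t_le_tnorm[OF assms, of y] by simp
  with t_measurable[OF assms] show ?thesis
    unfolding poly_growth_def by blast
qed

lemma poly_growth_add:
  assumes "poly_growth k f" "poly_growth k g"
  shows "poly_growth k (\<lambda>y. f y + g y)"
proof -
  obtain C D where "\<And>y. \<bar>f y\<bar> \<le> C * (1 + tnorm y) ^ k" "\<And>y. \<bar>g y\<bar> \<le> D * (1 + tnorm y) ^ k"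
    using assms by (auto simp: poly_growth_def)
  then have "\<bar>f y + g y\<bar> \<le> (C + D) * (1 + tnorm y) ^ k" for y
    by (smt (verit) distrib_right)
  with assms show ?thesis
    by (auto simp: poly_growth_def)
qed

lemma poly_growth_diff:
  assumes "poly_growth k f" "poly_growth k g"
  shows "poly_growth k (\<lambda>y. f y - g y)"
proof -
  obtain C D where "\<And>y. \<bar>f y\<bar> \<le> C * (1 + tnorm y) ^ k" "\<And>y. \<bar>g y\<bar> \<le> D * (1 + tnorm y) ^ k"
    using assms by (auto simp: poly_growth_def)
  then have "\<bar>f y - g y\<bar> \<le> (C + D) * (1 + tnorm y) ^ k" for y
    by (smt (verit) distrib_right)
  with assms show ?thesis
    by (auto simp: poly_growth_def)
qed

lemma poly_growth_mult:
  assumes "poly_growth j f" "poly_growth k g"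
  shows "poly_growth (j + k) (\<lambda>y. f y * g y)"
proof -
  obtain C D where C: "\<And>y. \<bar>f y\<bar> \<le> C * (1 + tnorm y) ^ j" and D: "\<And>y. \<bar>g y\<bar> \<le> D * (1 + tnorm y) ^ k"
    using assms by (auto simp: poly_growth_def)
  have "\<bar>f y * g y\<bar> \<le> (C * D) * (1 + tnorm y) ^ (j + k)" for y
  proof -
    have "\<bar>f y * g y\<bar> \<le> C * (1 + tnorm y) ^ j * (D * (1 + tnorm y) ^ k)"
      unfolding abs_mult by (intro mult_mono C D) (use C[of y] in auto)
    then show ?thesis
      by (simp add: power_add mult_ac)
  qed
  with assms show ?thesis
    by (auto simp: poly_growth_def)
qed

lemma poly_growth_sum:
  "(\<And>a. a \<in> A \<Longrightarrow> poly_growth k (f a)) \<Longrightarrow> poly_growth k (\<lambda>y. \<Sum>a\<in>A. f a y)"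
proof (induction A rule: infinite_finite_induct)
  case (insert a A)
  then show ?case
    by (simp add: poly_growth_add)
qed (simp_all add: poly_growth_const)

lemma integrable_udens_mult:
  assumes "poly_growth k f"
  shows "integrable \<nu> (\<lambda>y. udens h y * f y)"
proof -
  obtain C where f: "f \<in> borel_measurable \<nu>" and C: "\<And>y. \<bar>f y\<bar> \<le> C * (1 + tnorm y) ^ k"
    using assms by (auto simp: poly_growth_def)
  obtain c where "c > 0" and c: "integrable \<nu> (\<lambda>y. udens h y * exp (c * tnorm y))"
    by (rule integrable_udens_exp_tnorm)
  define d where "d = c / (k + 1)"
  have "d > 0"
    using \<open>c > 0\<close> by (simp add: d_def)
  have growth: "(1 + tnorm y) ^ k \<le> (1 + 1 / d) ^ k * exp (c * tnorm y)" for y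
  proof -
    have "1 + tnorm y \<le> exp (d * tnorm y) + exp (d * tnorm y) / d"
      using le_scaled_exp[OF \<open>d > 0\<close>, of "tnorm y"] \<open>d > 0\<close> tnorm_nonneg[of y]
      by (smt (verit) one_le_exp_iff zero_le_mult_iff)
    then have "(1 + tnorm y) ^ k \<le> ((1 + 1 / d) * exp (d * tnorm y)) ^ k"
      using tnorm_nonneg[of y] by (intro power_mono) (auto simp: field_simps)
    also have "\<dots> = (1 + 1 / d) ^ k * exp ((k * d) * tnorm y)"
      by (simp add: power_mult_distrib exp_of_nat_mult[symmetric] mult.assoc)
    also have "\<dots> \<le> (1 + 1 / d) ^ k * exp (c * tnorm y)"
      using \<open>d > 0\<close> \<open>c > 0\<close> tnorm_nonneg[of y]
      by (intro mult_left_mono mult_right_mono) (auto simp: d_def field_simps)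
    finally show ?thesis .
  qed
  show ?thesis
  proof (rule Bochner_Integration.integrable_bound)
    show "integrable \<nu> (\<lambda>y. (\<bar>C\<bar> * (1 + 1 / d) ^ k) * (udens h y * exp (c * tnorm y)))"
      using c by simp
    show "AE y in \<nu>. norm (udens h y * f y) \<le> norm ((\<bar>C\<bar> * (1 + 1 / d) ^ k) * (udens h y * exp (c * tnorm y)))"
    proof (intro AE_I2)
      fix y
      have "\<bar>f y\<bar> \<le> \<bar>C\<bar> * (1 + tnorm y) ^ k"
        using C[of y] tnorm_nonneg[of y] by (smt (verit) mult_right_mono zero_le_power)
      also have "\<dots> \<le> \<bar>C\<bar> * ((1 + 1 / d) ^ k * exp (c * tnorm y))"
        using growth[of y] by (intro mult_left_mono) auto
      finally have "\<bar>f y\<bar> \<le> \<bar>C\<bar> * ((1 + 1 / d) ^ k * exp (c * tnorm y))" .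
      then show "norm (udens h y * f y) \<le> norm ((\<bar>C\<bar> * (1 + 1 / d) ^ k) * (udens h y * exp (c * tnorm y)))"
        using udens_pos[of h y] \<open>d > 0\<close> by (simp add: abs_mult mult_left_mono mult_ac)
    qed
  qed (use f in measurable)
qed

lemma abs_udens_diff_le:
  assumes "\<And>a. a < m \<Longrightarrow> \<bar>h' a - h a\<bar> \<le> e"
  shows "\<bar>udens h' y - udens h y\<bar> \<le> udens h y * (e * tnorm y * exp (e * tnorm y))"
proof -
  define u where "u = (\<Sum>a<m. t y a * (h' a - h a))"
  have "udens h' y = udens h y * exp u"
    by (simp add: udens_def u_def exp_add[symmetric] sum.distrib[symmetric] algebra_simps)
  then have "udens h' y - udens h y = udens h y * (exp u - 1)"
    by (simp add: algebra_simps)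
  then have "\<bar>udens h' y - udens h y\<bar> = udens h y * \<bar>exp u - 1\<bar>"
    using udens_pos[of h y] by (simp add: abs_mult)
  moreover have "\<bar>u\<bar> \<le> e * tnorm y"
  proof -
    have "\<bar>u\<bar> \<le> (\<Sum>a<m. \<bar>t y a\<bar> * e)"
      unfolding u_def using assms
      by (intro order_trans[OF sum_abs] sum_mono) (auto simp: abs_mult intro: mult_left_mono)
    then show ?thesis
      by (simp add: tnorm_def sum_distrib_left mult.commute)
  qed
  then have "\<bar>exp u - 1\<bar> \<le> e * tnorm y * exp (e * tnorm y)"
    using abs_exp_minus_one_le[of u] by (smt (verit) exp_le_cancel_iff mult_mono abs_ge_zero exp_ge_zero)
  ultimately show ?thesis
    using udens_pos[of h y] by (simp add: mult_left_mono)
qed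

lemma abs_udens_diff_quotient_le:
  assumes "c > 0" "s \<noteq> 0" "K \<ge> 0" "K * \<bar>s\<bar> \<le> c / 2"
    and "\<And>a. a < m \<Longrightarrow> \<bar>h' a - h a\<bar> \<le> K * \<bar>s\<bar>"
  shows "\<bar>(udens h' y - udens h y) / s\<bar> \<le> 2 * K / c * (udens h y * exp (c * tnorm y))"
proof -
  let ?B = "tnorm y"
  have "K * \<bar>s\<bar> * ?B \<le> c / 2 * ?B"
    using assms(4) tnorm_nonneg[of y] by (rule mult_right_mono)
  then have "exp (K * \<bar>s\<bar> * ?B) \<le> exp (c / 2 * ?B)"
    by simp
  then have "K * \<bar>s\<bar> * ?B * exp (K * \<bar>s\<bar> * ?B) \<le> K * \<bar>s\<bar> * ?B * exp (c / 2 * ?B)"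
    using assms(3) tnorm_nonneg[of y] by (intro mult_left_mono) auto
  also have "\<dots> = \<bar>s\<bar> * (K * ?B * exp (c / 2 * ?B))"
    by (simp add: mult_ac)
  also have "\<dots> \<le> \<bar>s\<bar> * (K * (exp (c / 2 * ?B) / (c / 2)) * exp (c / 2 * ?B))"
    using assms le_scaled_exp[of "c / 2" ?B] by (intro mult_left_mono mult_right_mono) auto
  also have "\<dots> = \<bar>s\<bar> * (2 * K / c * exp (c * ?B))"
    by (simp add: exp_add[symmetric] field_simps)
  finally have "\<bar>udens h' y - udens h y\<bar> \<le> \<bar>s\<bar> * (2 * K / c * (udens h y * exp (c * ?B)))"
    using abs_udens_diff_le[OF assms(5)] udens_pos[of h y]
    by (smt (verit, best) mult.left_commute mult_left_mono)
  then show ?thesis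
    using assms(2) by (simp add: abs_divide divide_le_eq mult.commute)
qed

lemma integrable_udens_of_quotient_le:
  assumes "integrable \<nu> w" "s \<noteq> 0" "\<And>y. \<bar>(udens h' y - udens h y) / s\<bar> \<le> w y"
  shows "integrable \<nu> (udens h')"
proof (rule Bochner_Integration.integrable_bound)
  show "integrable \<nu> (\<lambda>y. udens h y + \<bar>s\<bar> * w y)"
    using integrable_udens assms(1) by simp
  show "AE y in \<nu>. norm (udens h' y) \<le> norm (udens h y + \<bar>s\<bar> * w y)"
  proof (intro AE_I2)
    fix y
    have "\<bar>udens h' y - udens h y\<bar> \<le> \<bar>s\<bar> * w y"
      using assms(2) assms(3)[of y] by (simp add: abs_divide divide_le_eq mult.commute)
    then show "norm (udens h' y) \<le> norm (udens h y + \<bar>s\<bar> * w y)"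
      using udens_pos[of h' y] udens_pos[of h y] by (simp add: abs_le_iff)
  qed
qed measurable

lemma has_real_derivative_udens:
  fixes G :: "real \<Rightarrow> nat \<Rightarrow> real" and J :: "nat \<Rightarrow> real"
  assumes G0: "\<And>a. a < m \<Longrightarrow> G 0 a = h a"
    and G': "\<And>a. a < m \<Longrightarrow> ((\<lambda>s. G s a) has_real_derivative J a) (at 0)"
  shows "((\<lambda>s. udens (G s) y) has_real_derivative udens h y * (\<Sum>a<m. t y a * J a)) (at 0)"
proof -
  have "((\<lambda>s. exp (\<Sum>a<m. t y a * G s a)) has_real_derivative
      exp (\<Sum>a<m. t y a * G 0 a) * (\<Sum>a<m. t y a * J a)) (at 0)"
    by (auto intro!: derivative_eq_intros G' simp: mult.commute)
  moreover have "udens (G 0) = udens h"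
    by (rule udens_cong) (simp add: G0)
  ultimately show ?thesis
    by (simp add: udens_def[symmetric])
qed

lemma udens_difference_quotients_dominated:
  fixes G :: "real \<Rightarrow> nat \<Rightarrow> real" and J :: "nat \<Rightarrow> real"
  assumes G0: "\<And>a. a < m \<Longrightarrow> G 0 a = h a"
    and G': "\<And>a. a < m \<Longrightarrow> ((\<lambda>s. G s a) has_real_derivative J a) (at 0)"
  obtains w where "integrable \<nu> w"
    and "\<forall>\<^sub>F s in at 0. s \<noteq> 0 \<and> (\<forall>y. \<bar>(udens (G s) y - udens h y) / s\<bar> \<le> w y)"
proof -
  obtain c where "c > 0" and c: "integrable \<nu> (\<lambda>y. udens h y * exp (c * tnorm y))"
    by (rule integrable_udens_exp_tnorm)
  define K where "K = 1 + (\<Sum>a<m. \<bar>J a\<bar>)"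
  have "K \<ge> 1"
    by (simp add: K_def sum_nonneg)
  define w where "w y = 2 * K / c * (udens h y * exp (c * tnorm y))" for y
  have "integrable \<nu> w"
    using c by (simp add: w_def[abs_def])
  have G_near: "\<forall>\<^sub>F s in at 0. \<forall>a\<in>{..<m}. \<bar>G s a - h a\<bar> \<le> K * \<bar>s\<bar>"
  proof (rule eventually_ball_finite, simp, intro ballI)
    fix a
    assume "a \<in> {..<m}"
    then have "a < m" by simp
    have JK: "\<bar>J a\<bar> + 1 \<le> K"
      using \<open>a < m\<close> member_le_sum[of a "{..<m}" "\<lambda>a. \<bar>J a\<bar>"] by (simp add: K_def)
    from eventually_abs_diff_le_deriv[OF G'[OF \<open>a < m\<close>]]
    show "\<forall>\<^sub>F s in at 0. \<bar>G s a - h a\<bar> \<le> K * \<bar>s\<bar>"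
    proof eventually_elim
      case (elim s)
      moreover have "(\<bar>J a\<bar> + 1) * \<bar>s\<bar> \<le> K * \<bar>s\<bar>"
        using JK by (rule mult_right_mono) simp
      ultimately show ?case
        using G0[OF \<open>a < m\<close>] by simp
    qed
  qed
  have small: "\<forall>\<^sub>F s in at (0::real). s \<noteq> 0 \<and> K * \<bar>s\<bar> \<le> c / 2"
  proof -
    have "\<forall>\<^sub>F s in at (0::real). \<bar>s\<bar> < c / (2 * K)"
      unfolding eventually_at dist_real_def using \<open>c > 0\<close> \<open>K \<ge> 1\<close>
      by (intro exI[of _ "c / (2 * K)"]) auto
    then show ?thesis
      unfolding eventually_at_filter
      by eventually_elim (use \<open>K \<ge> 1\<close> in \<open>auto simp: field_simps\<close>)
  qed
  have "\<forall>\<^sub>F s in at 0. s \<noteq> 0 \<and> (\<forall>y. \<bar>(udens (G s) y - udens h y) / s\<bar> \<le> w y)"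
    using G_near small
  proof eventually_elim
    case (elim s)
    then show ?case
      unfolding w_def using \<open>c > 0\<close> \<open>K \<ge> 1\<close> by (intro conjI allI abs_udens_diff_quotient_le) auto
  qed
  with \<open>integrable \<nu> w\<close> show ?thesis
    using that by blast
qed

lemma has_real_derivative_partition:
  fixes G :: "real \<Rightarrow> nat \<Rightarrow> real" and J :: "nat \<Rightarrow> real"
  assumes G0: "\<And>a. a < m \<Longrightarrow> G 0 a = h a"
    and G': "\<And>a. a < m \<Longrightarrow> ((\<lambda>s. G s a) has_real_derivative J a) (at 0)"
  shows "((\<lambda>s. partition (G s)) has_real_derivative (\<integral>y. udens h y * (\<Sum>a<m. t y a * J a) \<partial>\<nu>)) (at 0)"
proof -
  obtain w where w: "integrable \<nu> w"
    and bound: "\<forall>\<^sub>F s in at 0. s \<noteq> 0 \<and> (\<forall>y. \<bar>(udens (G s) y - udens h y) / s\<bar> \<le> w y)"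
    using udens_difference_quotients_dominated[OF G0 G'] by blast
  have udens_G0: "udens (G 0) = udens h"
    by (rule udens_cong) (simp add: G0)
  have "((\<lambda>r. \<integral>y. (udens (G r) y - udens h y) / r \<partial>\<nu>)
      \<longlongrightarrow> (\<integral>y. udens h y * (\<Sum>a<m. t y a * J a) \<partial>\<nu>)) (at 0)"
  proof (rule integral_dominated_convergence_at[OF _ _ w])
    show "AE y in \<nu>. ((\<lambda>r. (udens (G r) y - udens h y) / r) \<longlongrightarrow> udens h y * (\<Sum>a<m. t y a * J a)) (at 0)"
      using has_real_derivative_udens[OF G0 G'] udens_G0 by (simp add: has_field_derivative_iff)
    show "\<forall>\<^sub>F r in at 0. AE y in \<nu>. \<bar>(udens (G r) y - udens h y) / r\<bar> \<le> w y"
      using bound by eventually_elim auto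
  qed measurable
  moreover have "\<forall>\<^sub>F r in at 0. (\<integral>y. (udens (G r) y - udens h y) / r \<partial>\<nu>)
      = (partition (G r) - partition (G 0)) / (r - 0)"
    using bound
  proof eventually_elim
    case (elim r)
    then have "integrable \<nu> (udens (G r))"
      using integrable_udens_of_quotient_le[OF w] by blast
    then show ?case
      by (simp add: partition_def udens_G0 integrable_udens)
  qed
  ultimately show ?thesis
    unfolding has_field_derivative_iff by (rule Lim_transform_eventually)
qed

definition family :: "'y measure" where
  "family = density \<nu> (\<lambda>y. ennreal (udens h y / partition h))"

lemma family_density_pos: "udens h y / partition h > 0"
  using udens_pos partition_pos by simp

lemma prob_space_family: "prob_space family"
proof (rule prob_spaceI)
  have "emeasure family (space family)
      = (\<integral>\<^sup>+y. ennreal (udens h y / partition h) * indicator (space \<nu>) y \<partial>\<nu>)"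
    by (simp add: family_def emeasure_density)
  also have "\<dots> = (\<integral>\<^sup>+y. ennreal (udens h y / partition h) \<partial>\<nu>)"
    by (rule nn_integral_cong) simp
  also have "\<dots> = ennreal (\<integral>y. udens h y / partition h \<partial>\<nu>)"
    using integrable_udens
    by (intro nn_integral_eq_integral) (auto intro!: AE_I2 less_imp_le[OF family_density_pos])
  also have "\<dots> = 1"
    using partition_pos by (simp add: partition_def)
  finally show "emeasure family (space family) = 1" .
qed

lemma integral_family:
  "f \<in> borel_measurable \<nu> \<Longrightarrow> integral\<^sup>L family f = (\<integral>y. udens h y / partition h * f y \<partial>\<nu>)"
  unfolding family_def
  by (subst integral_density) (auto intro!: AE_I2 less_imp_le[OF family_density_pos])

lemma integrable_family: "poly_growth k f \<Longrightarrow> integrable family f"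
  unfolding family_def using integrable_udens_mult[of k f]
  by (subst integrable_density) (auto simp: poly_growth_def intro!: AE_I2 less_imp_le[OF family_density_pos])

lemma has_real_derivative_log_density:
  fixes G :: "real \<Rightarrow> nat \<Rightarrow> real" and J :: "nat \<Rightarrow> real"
  assumes G0: "\<And>a. a < m \<Longrightarrow> G 0 a = h a"
    and G': "\<And>a. a < m \<Longrightarrow> ((\<lambda>s. G s a) has_real_derivative J a) (at 0)"
  shows "((\<lambda>s. (\<Sum>a<m. t y a * G s a) - ln (partition (G s))) has_real_derivative
           (\<Sum>a<m. (t y a - mean_t family t a) * J a)) (at 0)"
proof -
  let ?D = "\<integral>y. udens h y * (\<Sum>a<m. t y a * J a) \<partial>\<nu>"
  have "partition (G 0) = partition h"
    unfolding partition_def by (metis udens_cong G0)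
  then have "((\<lambda>s. ln (partition (G s))) has_real_derivative ?D / partition h) (at 0)"
    using DERIV_chain2[OF DERIV_ln has_real_derivative_partition[OF G0 G']] partition_pos
    by (simp add: divide_inverse mult.commute)
  moreover have "?D / partition h = (\<Sum>a<m. mean_t family t a * J a)"
  proof -
    have "?D / partition h = (\<integral>y. udens h y * (\<Sum>a<m. t y a * J a) / partition h \<partial>\<nu>)"
      by simp
    also have "\<dots> = (\<integral>y. (\<Sum>a<m. J a * (udens h y / partition h * t y a)) \<partial>\<nu>)"
      by (simp add: sum_distrib_left sum_divide_distrib mult_ac)
    also have "\<dots> = (\<Sum>a<m. J a * (\<integral>y. udens h y / partition h * t y a \<partial>\<nu>))"
      using integrable_udens_mult[OF poly_growth_t]
      by (subst Bochner_Integration.integral_sum) (auto simp: mult_ac)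
    also have "\<dots> = (\<Sum>a<m. mean_t family t a * J a)"
      by (simp add: mean_t_def integral_family mult.commute)
    finally show ?thesis .
  qed
  moreover have "((\<lambda>s. \<Sum>a<m. t y a * G s a) has_real_derivative (\<Sum>a<m. t y a * J a)) (at 0)"
    by (intro DERIV_sum DERIV_cmult G') simp
  ultimately show ?thesis
    by (auto intro!: DERIV_diff simp: algebra_simps sum_subtractf)
qed

lemma covar_mean_score_products:
  fixes J :: "nat \<Rightarrow> 'p \<Rightarrow> real" and N :: nat
  assumes "N \<ge> 1"
  defines "u \<equiv> \<lambda>p y. \<Sum>a<m. (t y a - mean_t family t a) * J a p"
  shows "covar (PiM {..<N} (\<lambda>_. family))
           (\<lambda>ys. 1 / real N * (\<Sum>i<N. u p (ys i) * u q (ys i)))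
           (\<lambda>ys. 1 / real N * (\<Sum>i<N. u r (ys i) * u s (ys i)))
    = 1 / real N * (\<Sum>a<m. \<Sum>b<m. \<Sum>c<m. \<Sum>d<m. J a p * J b q * J c r * J d s *
        (kurt_t family t a b c d - fisher_h family t a b * fisher_h family t c d))"
proof -
  define X where "X a y = t y a - mean_t family t a" for a y
  have X: "poly_growth 1 (X a)" if "a < m" for a
    unfolding X_def[abs_def] using that by (intro poly_growth_diff poly_growth_t poly_growth_const)
  have u: "poly_growth 1 (u p)" for p
    unfolding u_def X_def[symmetric]
    by (intro poly_growth_sum poly_growth_mult[where k = 0, simplified] X poly_growth_const) simp
  have covar_XX: "covar family (\<lambda>y. X a y * X b y) (\<lambda>y. X c y * X d y)
      = kurt_t family t a b c d - fisher_h family t a b * fisher_h family t c d" for a b c d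
    by (simp add: covar_def kurt_t_def fisher_h_def X_def mult_ac)
  have uu: "poly_growth 2 (\<lambda>y. u p y * u q y)" for p q
    using poly_growth_mult[OF u u] by (simp only: one_add_one)
  have XX: "poly_growth 2 (\<lambda>y. X a y * X b y)" if "a < m" "b < m" for a b
    using poly_growth_mult[OF X[OF that(1)] X[OF that(2)]] by (simp only: one_add_one)
  have "covar (PiM {..<N} (\<lambda>_. family))
           (\<lambda>ys. 1 / real N * (\<Sum>i<N. u p (ys i) * u q (ys i)))
           (\<lambda>ys. 1 / real N * (\<Sum>i<N. u r (ys i) * u s (ys i)))
      = 1 / real N * covar family (\<lambda>y. u p y * u q y) (\<lambda>y. u r y * u s y)"
    using assms(1) integrable_family[OF uu] integrable_family[OF poly_growth_mult[OF uu uu]]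
    by (intro covar_sample_mean prob_space_family) simp_all
  also have "covar family (\<lambda>y. u p y * u q y) (\<lambda>y. u r y * u s y)
      = (\<Sum>a<m. \<Sum>b<m. \<Sum>c<m. \<Sum>d<m. J a p * J b q * J c r * J d s *
          covar family (\<lambda>y. X a y * X b y) (\<lambda>y. X c y * X d y))"
    unfolding u_def X_def[symmetric]
    by (intro covar_contract4 integrable_family[OF XX] integrable_family[OF poly_growth_mult[OF XX XX]])
  finally show ?thesis
    by (simp only: covar_XX)
qed

end

section \<open>Derivatives of the network output\<close>

lemma differentiable_param_update: "(\<lambda>s. (\<theta>(p := \<theta> p + s)) q) differentiable (at s0)"
  by (cases "q = p") (auto intro!: derivative_intros)

lemma differentiable_preact:
  assumes "\<And>j. (\<lambda>s. H s j) differentiable (at s0)"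
  shows "(\<lambda>s. preact n (\<theta>(p := \<theta> p + s)) l (H s) i) differentiable (at s0)"
proof -
  have "(\<lambda>s. if j < n l then H s j else 1) differentiable (at s0)" for j
    using assms by (cases "j < n l") auto
  then show ?thesis
    unfolding preact_def
    by (intro differentiable_sum differentiable_mult differentiable_param_update ballI) auto
qed

lemma differentiable_hidden:
  assumes "\<forall>z. \<sigma> differentiable (at z)"
  shows "(\<lambda>s. hidden \<sigma> n x (\<theta>(p := \<theta> p + s)) l i) differentiable (at s0)"
proof (induction l arbitrary: i)
  case (Suc l)
  have "(\<lambda>s. preact n (\<theta>(p := \<theta> p + s)) l (hidden \<sigma> n x (\<theta>(p := \<theta> p + s)) l) i) differentiable (at s0)"
    by (rule differentiable_preact) (rule Suc.IH)
  with assms have "\<sigma> \<circ> (\<lambda>s. preact n (\<theta>(p := \<theta> p + s)) l (hidden \<sigma> n x (\<theta>(p := \<theta> p + s)) l) i)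
      differentiable (at s0)"
    by (blast intro: differentiable_chain_at)
  then show ?case
    by (simp only: comp_def hidden.simps)
qed (simp add: differentiable_const)

lemma net_out_has_real_derivative:
  assumes "\<forall>z. \<sigma> differentiable (at z)"
  shows "((\<lambda>s. net_out \<sigma> n L x (\<theta>(p := \<theta> p + s)) a) has_real_derivative
           pderiv_param (\<lambda>\<theta>'. net_out \<sigma> n L x \<theta>' a) \<theta> p) (at 0)"
proof -
  have "(\<lambda>s. net_out \<sigma> n L x (\<theta>(p := \<theta> p + s)) a) differentiable (at 0)"
    unfolding net_out_def by (rule differentiable_preact) (rule differentiable_hidden[OF assms])
  then show ?thesis
    unfolding pderiv_param_def by (simp add: DERIV_deriv_iff_real_differentiable)
qed

theorem mainTheorem6:
  fixes x :: "nat \<Rightarrow> real" and L N :: nat and n :: "nat \<Rightarrow> nat"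
    and \<sigma> :: "real \<Rightarrow> real" and \<theta> :: param
    and \<nu> :: "'y measure" and t :: "'y \<Rightarrow> nat \<Rightarrow> real"
  assumes "L \<ge> 1"
    and "\<forall>l\<in>{1..L}. n l \<ge> 1"
    and "\<forall>z. \<sigma> differentiable (at z)"
    and "\<forall>a<n L. (\<lambda>y. t y a) \<in> borel_measurable \<nu>"
    and "in_interior_nps \<nu> t (n L) (net_out \<sigma> n L x \<theta>)"
    and "N \<ge> 1"
  shows
   "(let P = param_idx L n;
         M = model \<nu> t \<sigma> n L x \<theta>;
         S = PiM {..<N} (\<lambda>_. M);
         Ihat = emp_fisher \<nu> t \<sigma> n L x \<theta> N;
         J = (\<lambda>a p. pderiv_param (\<lambda>\<theta>'. net_out \<sigma> n L x \<theta>' a) \<theta> p);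
         m = n L
     in sqrt (\<Sum>p\<in>P. \<Sum>q\<in>P. \<Sum>r\<in>P. \<Sum>s\<in>P.
                (covar S (\<lambda>ys. Ihat ys p q) (\<lambda>ys. Ihat ys r s))\<^sup>2)
        \<le> (1 / real N) * (sqrt (\<Sum>a<m. \<Sum>p\<in>P. (J a p)\<^sup>2)) ^ 4
          * sqrt (\<Sum>a<m. \<Sum>b<m. \<Sum>c<m. \<Sum>d<m.
                    (kurt_t M t a b c d - fisher_h M t a b * fisher_h M t c d)\<^sup>2))"
proof -
  define h where "h = net_out \<sigma> n L x \<theta>"
  define J where "J a p = pderiv_param (\<lambda>\<theta>'. net_out \<sigma> n L x \<theta>' a) \<theta> p" for a p
  interpret exp_family \<nu> t "n L" h
    using assms(1,2,4,5) by unfold_locales (auto simp: h_def)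
  have model: "model \<nu> t \<sigma> n L x \<theta> = family"
    using partition_pos
    by (simp add: model_def family_def loglik_def logpart_eq_ln_partition udens_def h_def[symmetric] exp_diff)
  have score: "score \<nu> t \<sigma> n L x \<theta> y p = (\<Sum>a<n L. (t y a - mean_t family t a) * J a p)" for y p
  proof -
    have "((\<lambda>s. loglik \<nu> t \<sigma> n L x (\<theta>(p := \<theta> p + s)) y) has_real_derivative
        (\<Sum>a<n L. (t y a - mean_t family t a) * J a p)) (at 0)"
      unfolding loglik_def logpart_eq_ln_partition
      by (rule has_real_derivative_log_density)
         (auto simp: h_def J_def net_out_has_real_derivative[OF assms(3)])
    then show ?thesis
      unfolding score_def pderiv_param_def by (rule DERIV_imp_deriv)
  qed
  have cov: "covar (PiM {..<N} (\<lambda>_. family))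
          (\<lambda>ys. emp_fisher \<nu> t \<sigma> n L x \<theta> N ys p q) (\<lambda>ys. emp_fisher \<nu> t \<sigma> n L x \<theta> N ys r s)
      = 1 / real N * (\<Sum>a<n L. \<Sum>b<n L. \<Sum>c<n L. \<Sum>d<n L. J a p * J b q * J c r * J d s *
          (kurt_t family t a b c d - fisher_h family t a b * fisher_h family t c d))" for p q r s
    unfolding emp_fisher_def score by (rule covar_mean_score_products[OF assms(6)])
  show ?thesis
    unfolding Let_def model J_def[symmetric] cov by (rule norm_contract4_le) simp
qed

end
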